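(* Let $R$ be a connected zero-sum-free semiring and $V$ a free $R$-module. The set of basis lines of $V$ does not depend on the choice of basis. Moreover, any $R$-module automorphism $f:V\to V$ induces a permutation $\sigma_f$ of the set of basis lines, sending the line spanned by a basis vector $v$ to $\mathrm{span}(f(v))$; and for two automorphisms $f,g$ one has $\sigma_{fg}=\sigma_f\sigma_g$.
   Context: All semirings are commutative. $R$ is zero-sum-free if $a+b=0$ implies $a=b=0$, and connected if $\mathrm{Spec}\,R$ is connected, equivalently $R$ has only trivial idempotents. Given a basis of $V$, a basis line is a submodule spanned by a single basis vector. *)

theory Defs
  imports Main
begin

definition zero_sum_free :: "'r::comm_semiring_1 itself \<Rightarrow> bool" where
  "zero_sum_free _ \<longleftrightarrow> (\<forall>a b::'r. a + b = 0 \<longrightarrow> a = 0 \<and> b = 0)"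

text \<open>Connected: Spec R is connected (in particular nonempty, so R is nontrivial),
  equivalently R has only the trivial idempotents 0 and 1.\<close>
definition connected_semiring :: "'r::comm_semiring_1 itself \<Rightarrow> bool" where
  "connected_semiring _ \<longleftrightarrow> (0::'r) \<noteq> 1 \<and> (\<forall>e::'r. e * e = e \<longrightarrow> e = 0 \<or> e = 1)"

definition semimodule :: "('r::comm_semiring_1 \<Rightarrow> 'v::comm_monoid_add \<Rightarrow> 'v) \<Rightarrow> bool" where
  "semimodule sc \<longleftrightarrow>
     (\<forall>r x y. sc r (x + y) = sc r x + sc r y) \<and>
     (\<forall>r q x. sc (r + q) x = sc r x + sc q x) \<and>
     (\<forall>r q x. sc (r * q) x = sc r (sc q x)) \<and>
     (\<forall>x. sc 1 x = x) \<and>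
     (\<forall>x. sc 0 x = 0) \<and>
     (\<forall>r. sc r 0 = 0)"

definition lin_comb :: "('r::comm_semiring_1 \<Rightarrow> 'v::comm_monoid_add \<Rightarrow> 'v) \<Rightarrow> 'v set \<Rightarrow> ('v \<Rightarrow> 'r) \<Rightarrow> 'v" where
  "lin_comb sc B c = (\<Sum>b\<in>{b\<in>B. c b \<noteq> 0}. sc (c b) b)"

definition fin_coeffs :: "'v set \<Rightarrow> ('v \<Rightarrow> 'r::comm_semiring_1) \<Rightarrow> bool" where
  "fin_coeffs B c \<longleftrightarrow> finite {b\<in>B. c b \<noteq> 0} \<and> (\<forall>b. b \<notin> B \<longrightarrow> c b = 0)"

definition is_basis :: "('r::comm_semiring_1 \<Rightarrow> 'v::comm_monoid_add \<Rightarrow> 'v) \<Rightarrow> 'v set \<Rightarrow> bool" where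
  "is_basis sc B \<longleftrightarrow> (\<forall>v. \<exists>!c. fin_coeffs B c \<and> lin_comb sc B c = v)"

definition free_module :: "('r::comm_semiring_1 \<Rightarrow> 'v::comm_monoid_add \<Rightarrow> 'v) \<Rightarrow> bool" where
  "free_module sc \<longleftrightarrow> semimodule sc \<and> (\<exists>B. is_basis sc B)"

definition span1 :: "('r::comm_semiring_1 \<Rightarrow> 'v::comm_monoid_add \<Rightarrow> 'v) \<Rightarrow> 'v \<Rightarrow> 'v set" where
  "span1 sc v = range (\<lambda>r. sc r v)"

definition basis_lines :: "('r::comm_semiring_1 \<Rightarrow> 'v::comm_monoid_add \<Rightarrow> 'v) \<Rightarrow> 'v set \<Rightarrow> 'v set set" where
  "basis_lines sc B = span1 sc ` B"

definition module_hom :: "('r::comm_semiring_1 \<Rightarrow> 'v::comm_monoid_add \<Rightarrow> 'v) \<Rightarrow> ('v \<Rightarrow> 'v) \<Rightarrow> bool" where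
  "module_hom sc f \<longleftrightarrow> (\<forall>x y. f (x + y) = f x + f y) \<and> (\<forall>r x. f (sc r x) = sc r (f x))"

definition module_aut :: "('r::comm_semiring_1 \<Rightarrow> 'v::comm_monoid_add \<Rightarrow> 'v) \<Rightarrow> ('v \<Rightarrow> 'v) \<Rightarrow> bool" where
  "module_aut sc f \<longleftrightarrow> module_hom sc f \<and> bij f"

definition induced_perm :: "('r::comm_semiring_1 \<Rightarrow> 'v::comm_monoid_add \<Rightarrow> 'v) \<Rightarrow> ('v \<Rightarrow> 'v) \<Rightarrow> 'v set \<Rightarrow> 'v set \<Rightarrow> 'v set" where
  "induced_perm sc f B L = (THE L'. \<exists>b\<in>B. L = span1 sc b \<and> L' = span1 sc (f b))"

end

theory Submission
  imports Defs
begin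

text \<open>Expanding an element b of a basis B in a second basis B' and back yields row-finite
  matrices C, D with C D = D C = 1. Over a zero-sum-free semiring every summand
  C b b' * D b' x of an off-diagonal entry of C D vanishes, which makes each
  e = C b b' * D b' b idempotent. The e sum to 1, so by connectedness some e is 1, and
  then b and b' are multiples of each other: they span the same line. An automorphism
  maps bases to bases, hence acts on this basis-independent set of lines by taking
  images, which is what the induced map does.\<close>

lemma semimoduleD:
  assumes "semimodule sc"
  shows "sc r (x + y) = sc r x + sc r y" "sc (r + q) x = sc r x + sc q x"
    "sc (r * q) x = sc r (sc q x)" "sc 1 x = x" "sc 0 x = 0" "sc r 0 = 0"
  using assms unfolding semimodule_def by auto

lemma semimodule_sum_right:
  assumes "semimodule sc"
  shows "sc r (sum g A) = (\<Sum>i\<in>A. sc r (g i))"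
  by (induction A rule: infinite_finite_induct) (simp_all add: semimoduleD[OF assms])

lemma lin_comb_eq_sum_superset:
  assumes "semimodule sc" "finite S" "{b\<in>B. c b \<noteq> 0} \<subseteq> S" "S \<subseteq> B"
  shows "lin_comb sc B c = (\<Sum>b\<in>S. sc (c b) b)"
  unfolding lin_comb_def
  by (rule sum.mono_neutral_left) (use assms in \<open>auto simp: semimoduleD[OF assms(1)]\<close>)

lemma span1_subset:
  assumes "semimodule sc" "x \<in> span1 sc y"
  shows "span1 sc x \<subseteq> span1 sc y"
  using assms unfolding span1_def by (auto simp flip: semimoduleD(3)[OF assms(1)])

lemma zero_sum_free_sum_eq_0_iff:
  fixes f :: "'a \<Rightarrow> 'r::comm_semiring_1"
  assumes "zero_sum_free TYPE('r)" "finite A"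
  shows "sum f A = 0 \<longleftrightarrow> (\<forall>x\<in>A. f x = 0)"
  using assms(2)
proof (induction A rule: finite_induct)
  case (insert a A)
  have "f a + sum f A = 0 \<longleftrightarrow> f a = 0 \<and> sum f A = 0"
    using assms(1) unfolding zero_sum_free_def by (metis add.right_neutral)
  with insert show ?case by simp
qed simp

definition coord :: "('r::comm_semiring_1 \<Rightarrow> 'v::comm_monoid_add \<Rightarrow> 'v) \<Rightarrow> 'v set \<Rightarrow> 'v \<Rightarrow> 'v \<Rightarrow> 'r" where
  "coord sc B v = (THE c. fin_coeffs B c \<and> lin_comb sc B c = v)"

lemma coord_spec:
  assumes "is_basis sc B"
  shows "fin_coeffs B (coord sc B v) \<and> lin_comb sc B (coord sc B v) = v"
proof -
  have "\<exists>!c. fin_coeffs B c \<and> lin_comb sc B c = v" using assms by (simp add: is_basis_def)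
  then show ?thesis unfolding coord_def by (rule theI')
qed

lemma fin_coeffs_coord: "is_basis sc B \<Longrightarrow> fin_coeffs B (coord sc B v)"
  by (simp add: coord_spec)

lemma lin_comb_coord: "is_basis sc B \<Longrightarrow> lin_comb sc B (coord sc B v) = v"
  by (simp add: coord_spec)

lemma finite_coord_support:
  assumes "is_basis sc B"
  shows "finite {b\<in>B. coord sc B v b \<noteq> 0}"
  using fin_coeffs_coord[OF assms] unfolding fin_coeffs_def by simp

lemma coord_unique:
  assumes "is_basis sc B" "fin_coeffs B c" "lin_comb sc B c = v"
  shows "coord sc B v = c"
  unfolding coord_def by (rule the1_equality) (use assms in \<open>auto simp: is_basis_def\<close>)

lemma coord_basis_elem:
  fixes sc :: "'r::comm_semiring_1 \<Rightarrow> 'v::comm_monoid_add \<Rightarrow> 'v"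
  assumes "semimodule sc" "is_basis sc B" "b \<in> B" "(0::'r) \<noteq> 1"
  shows "coord sc B b x = (if x = b then 1 else 0)"
proof -
  have supp: "{x\<in>B. (if x = b then (1::'r) else 0) \<noteq> 0} = {b}" using assms(3,4) by auto
  have "coord sc B b = (\<lambda>x. if x = b then 1 else 0)"
    by (rule coord_unique[OF assms(2)])
      (use assms(3) in \<open>auto simp: fin_coeffs_def lin_comb_def supp semimoduleD[OF assms(1)]\<close>)
  then show ?thesis by simp
qed

lemma coord_zero:
  assumes "is_basis sc B"
  shows "coord sc B 0 x = 0"
proof -
  have "coord sc B 0 = (\<lambda>_. 0)"
    by (rule coord_unique[OF assms]) (auto simp: fin_coeffs_def lin_comb_def)
  then show ?thesis by simp
qed

lemma coord_add:
  assumes sm: "semimodule sc" and B: "is_basis sc B"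
  shows "coord sc B (u + v) x = coord sc B u x + coord sc B v x"
proof -
  let ?c = "coord sc B u" and ?d = "coord sc B v"
  define S where "S = {b\<in>B. ?c b \<noteq> 0} \<union> {b\<in>B. ?d b \<noteq> 0}"
  have finS: "finite S" using finite_coord_support[OF B] by (simp add: S_def)
  have "lin_comb sc B (\<lambda>b. ?c b + ?d b) = (\<Sum>b\<in>S. sc (?c b + ?d b) b)"
    by (rule lin_comb_eq_sum_superset[OF sm finS]) (auto simp: S_def)
  also have "\<dots> = (\<Sum>b\<in>S. sc (?c b) b) + (\<Sum>b\<in>S. sc (?d b) b)"
    by (simp add: semimoduleD[OF sm] sum.distrib)
  also have "\<dots> = lin_comb sc B ?c + lin_comb sc B ?d"
    by (simp add: lin_comb_eq_sum_superset[OF sm finS] S_def)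
  also have "\<dots> = u + v" by (simp add: lin_comb_coord[OF B])
  finally have lc: "lin_comb sc B (\<lambda>b. ?c b + ?d b) = u + v" .
  have "{b\<in>B. ?c b + ?d b \<noteq> 0} \<subseteq> S" by (auto simp: S_def)
  then have "finite {b\<in>B. ?c b + ?d b \<noteq> 0}" using finS by (rule finite_subset)
  then have "fin_coeffs B (\<lambda>b. ?c b + ?d b)"
    using fin_coeffs_coord[OF B] by (simp add: fin_coeffs_def)
  from coord_unique[OF B this lc] show ?thesis by simp
qed

lemma coord_smult:
  assumes sm: "semimodule sc" and B: "is_basis sc B"
  shows "coord sc B (sc r v) x = r * coord sc B v x"
proof -
  let ?c = "coord sc B v"
  define S where "S = {b\<in>B. ?c b \<noteq> 0}"
  have finS: "finite S" using finite_coord_support[OF B] by (simp add: S_def)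
  have "lin_comb sc B (\<lambda>b. r * ?c b) = (\<Sum>b\<in>S. sc (r * ?c b) b)"
    by (rule lin_comb_eq_sum_superset[OF sm finS]) (auto simp: S_def)
  also have "\<dots> = sc r (lin_comb sc B ?c)"
    by (simp add: lin_comb_def S_def semimoduleD[OF sm] semimodule_sum_right[OF sm])
  also have "\<dots> = sc r v" by (simp add: lin_comb_coord[OF B])
  finally have lc: "lin_comb sc B (\<lambda>b. r * ?c b) = sc r v" .
  have "{b\<in>B. r * ?c b \<noteq> 0} \<subseteq> S" by (auto simp: S_def)
  then have "finite {b\<in>B. r * ?c b \<noteq> 0}" using finS by (rule finite_subset)
  then have "fin_coeffs B (\<lambda>b. r * ?c b)"
    using fin_coeffs_coord[OF B] by (simp add: fin_coeffs_def)
  from coord_unique[OF B this lc] show ?thesis by simp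
qed

lemma coord_sum:
  assumes sm: "semimodule sc" and B: "is_basis sc B"
  shows "coord sc B (sum g A) x = (\<Sum>i\<in>A. coord sc B (g i) x)"
  by (induction A rule: infinite_finite_induct) (simp_all add: coord_zero[OF B] coord_add[OF sm B])

lemma basis_change_identity:
  fixes sc :: "'r::comm_semiring_1 \<Rightarrow> 'v::comm_monoid_add \<Rightarrow> 'v"
  assumes sm: "semimodule sc" and B: "is_basis sc B" and B': "is_basis sc B'"
    and nontriv: "(0::'r) \<noteq> 1" and "b \<in> B" "x \<in> B"
  shows "(\<Sum>b'\<in>{b'\<in>B'. coord sc B' b b' \<noteq> 0}. coord sc B' b b' * coord sc B b' x)
    = (if x = b then 1 else 0)"
proof -
  have "(if x = b then 1 else 0) = coord sc B (lin_comb sc B' (coord sc B' b)) x"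
    by (simp add: lin_comb_coord[OF B'] coord_basis_elem[OF sm B \<open>b \<in> B\<close> nontriv])
  also have "\<dots> = (\<Sum>b'\<in>{b'\<in>B'. coord sc B' b b' \<noteq> 0}. coord sc B' b b' * coord sc B b' x)"
    by (simp add: lin_comb_def coord_sum[OF sm B] coord_smult[OF sm B])
  finally show ?thesis by simp
qed

lemma inverse_matrices_monomial_row:
  fixes C :: "'a \<Rightarrow> 'b \<Rightarrow> 'r::comm_semiring_1" and D :: "'b \<Rightarrow> 'a \<Rightarrow> 'r"
  assumes zsf: "zero_sum_free TYPE('r)" and conn: "connected_semiring TYPE('r)"
    and b: "b \<in> B" and fin_row: "finite {b'\<in>B'. C b b' \<noteq> 0}"
    and CD: "\<And>x. x \<in> B \<Longrightarrow>
      (\<Sum>b'\<in>{b'\<in>B'. C b b' \<noteq> 0}. C b b' * D b' x) = (if x = b then 1 else 0)"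
    and fin_rows: "\<And>b'. b' \<in> B' \<Longrightarrow> finite {x\<in>B. D b' x \<noteq> 0}"
    and DC: "\<And>b'. b' \<in> B' \<Longrightarrow> (\<Sum>x\<in>{x\<in>B. D b' x \<noteq> 0}. D b' x * C x b') = 1"
  obtains b' where "b' \<in> B'" "C b b' * D b' b = 1" "\<And>x. x \<in> B \<Longrightarrow> x \<noteq> b \<Longrightarrow> D b' x = 0"
proof -
  define S where "S = {b'\<in>B'. C b b' \<noteq> 0}"
  have off_diag: "C b b' * D b' x = 0" if "x \<in> B" "x \<noteq> b" "b' \<in> B'" for x b'
  proof (cases "b' \<in> S")
    case True
    with CD[OF \<open>x \<in> B\<close>] \<open>x \<noteq> b\<close> show ?thesis
      using zero_sum_free_sum_eq_0_iff[OF zsf fin_row] by (simp add: S_def)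
  qed (use that in \<open>simp add: S_def\<close>)
  have idem: "(C b b' * D b' b) * (C b b' * D b' b) = C b b' * D b' b" if b': "b' \<in> B'" for b'
  proof (cases "D b' b = 0")
    case False
    define U where "U = {x\<in>B. D b' x \<noteq> 0}"
    have finU: "finite U" and bU: "b \<in> U" using fin_rows[OF b'] False b by (auto simp: U_def)
    have "C b b' * D b' b = C b b' * (\<Sum>x\<in>U. D b' x * C x b') * D b' b"
      using DC[OF b'] by (simp add: U_def)
    also have "\<dots> = (\<Sum>x\<in>U. (C b b' * D b' x) * C x b' * D b' b)"
      by (simp add: sum_distrib_left sum_distrib_right mult.assoc)
    also have "\<dots> = (C b b' * D b' b) * C b b' * D b' b"
      using off_diag b' by (subst sum.remove[OF finU bU]) (auto simp: U_def intro!: sum.neutral)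
    finally show ?thesis by (simp add: mult.assoc)
  qed simp
  have "(\<Sum>b'\<in>S. C b b' * D b' b) = 1" using CD[OF b] by (simp add: S_def)
  then obtain b' where b'S: "b' \<in> S" and "C b b' * D b' b \<noteq> 0"
    using conn unfolding connected_semiring_def by (metis (no_types, lifting) sum.neutral)
  then have b': "b' \<in> B'" and unit: "C b b' * D b' b = 1"
    using idem conn unfolding connected_semiring_def S_def by auto
  have "D b' x = 0" if "x \<in> B" "x \<noteq> b" for x
  proof -
    have "D b' x = D b' x * (C b b' * D b' b)" using unit by simp
    also have "\<dots> = (C b b' * D b' x) * D b' b" by (simp add: mult_ac)
    finally show ?thesis using off_diag[OF that b'] by simp
  qed
  with b' unit show ?thesis by (rule that)
qed

lemma basis_line_in_other_basis:
  fixes sc :: "'r::comm_semiring_1 \<Rightarrow> 'v::comm_monoid_add \<Rightarrow> 'v"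
  assumes sm: "semimodule sc" and zsf: "zero_sum_free TYPE('r)"
    and conn: "connected_semiring TYPE('r)"
    and B: "is_basis sc B" and B': "is_basis sc B'" and b: "b \<in> B"
  obtains b' where "b' \<in> B'" "span1 sc b = span1 sc b'"
proof -
  have nontriv: "(0::'r) \<noteq> 1" using conn by (simp add: connected_semiring_def)
  obtain b' where b': "b' \<in> B'" and unit: "coord sc B' b b' * coord sc B b' b = 1"
    and off_diag: "\<And>x. x \<in> B \<Longrightarrow> x \<noteq> b \<Longrightarrow> coord sc B b' x = 0"
    by (rule inverse_matrices_monomial_row[OF zsf conn b, of B' "coord sc B'" "coord sc B"])
      (use finite_coord_support[OF B'] finite_coord_support[OF B]
         basis_change_identity[OF sm B B' nontriv b] basis_change_identity[OF sm B' B nontriv]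
       in auto)
  have "b' = lin_comb sc B (coord sc B b')" by (simp add: lin_comb_coord[OF B])
  also have "\<dots> = sc (coord sc B b' b) b"
    using lin_comb_eq_sum_superset[OF sm, of "{b}" B] b off_diag by auto
  finally have b'_mult: "b' = sc (coord sc B b' b) b" .
  then have "sc (coord sc B' b b') b' = sc (coord sc B' b b' * coord sc B b' b) b"
    by (simp add: semimoduleD(3)[OF sm])
  then have "sc (coord sc B' b b') b' = b"
    using unit by (simp add: semimoduleD(4)[OF sm])
  then have "b \<in> span1 sc b'" and "b' \<in> span1 sc b"
    using b'_mult unfolding span1_def by (metis rangeI)+
  with b' show ?thesis
    using span1_subset[OF sm] by (metis that subset_antisym)
qed

lemma basis_lines_unique:
  fixes sc :: "'r::comm_semiring_1 \<Rightarrow> 'v::comm_monoid_add \<Rightarrow> 'v"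
  assumes "semimodule sc" "zero_sum_free TYPE('r)" "connected_semiring TYPE('r)"
    and "is_basis sc B" "is_basis sc B'"
  shows "basis_lines sc B = basis_lines sc B'"
proof -
  have "basis_lines sc B \<subseteq> basis_lines sc B'" if "is_basis sc B" "is_basis sc B'" for B B'
  proof
    fix L assume "L \<in> basis_lines sc B"
    then obtain b where "b \<in> B" "L = span1 sc b" by (auto simp: basis_lines_def)
    then show "L \<in> basis_lines sc B'"
      by (metis basis_line_in_other_basis[OF assms(1-3) that] basis_lines_def image_eqI)
  qed
  with assms(4,5) show ?thesis by blast
qed

lemma span1_image:
  assumes "module_hom sc f"
  shows "span1 sc (f b) = f ` span1 sc b"
  using assms unfolding span1_def module_hom_def by (simp add: image_image)

lemma basis_lines_image:
  assumes "module_hom sc f"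
  shows "basis_lines sc (f ` B) = (\<lambda>L. f ` L) ` basis_lines sc B"
  using span1_image[OF assms] by (simp add: basis_lines_def image_image)

lemma module_hom_zero:
  assumes sm: "semimodule sc" and h: "module_hom sc f"
  shows "f 0 = 0"
proof -
  have "f 0 = f (sc 0 0)" by (simp add: semimoduleD[OF sm])
  also have "\<dots> = sc 0 (f 0)" using h unfolding module_hom_def by blast
  finally show ?thesis by (simp add: semimoduleD[OF sm])
qed

lemma module_hom_lin_comb:
  fixes sc :: "'r::comm_semiring_1 \<Rightarrow> 'v::comm_monoid_add \<Rightarrow> 'v"
  assumes sm: "semimodule sc" and h: "module_hom sc f" and "inj f"
  shows "f (lin_comb sc B (c \<circ> f)) = lin_comb sc (f ` B) c"
proof -
  have hom_sum: "f (sum g A) = (\<Sum>i\<in>A. f (g i))" for g and A :: "'v set"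
    by (induction A rule: infinite_finite_induct)
      (use module_hom_zero[OF sm h] h in \<open>simp_all add: module_hom_def\<close>)
  have supp: "{x\<in>f ` B. c x \<noteq> 0} = f ` {b\<in>B. c (f b) \<noteq> 0}" by auto
  have "f (lin_comb sc B (c \<circ> f)) = (\<Sum>b\<in>{b\<in>B. c (f b) \<noteq> 0}. sc (c (f b)) (f b))"
    using h by (simp add: lin_comb_def hom_sum module_hom_def)
  also have "\<dots> = lin_comb sc (f ` B) c"
    unfolding lin_comb_def supp using \<open>inj f\<close> by (simp add: sum.reindex inj_on_def)
  finally show ?thesis .
qed

lemma fin_coeffs_image_iff:
  assumes "bij f"
  shows "fin_coeffs (f ` B) c \<longleftrightarrow> fin_coeffs B (c \<circ> f)"
proof -
  have supp: "{b\<in>B. c (f b) \<noteq> 0} = f -` {x\<in>f ` B. c x \<noteq> 0}"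
    using bij_is_inj[OF assms] by (auto simp: inj_image_mem_iff)
  have "finite {x\<in>f ` B. c x \<noteq> 0} \<longleftrightarrow> finite (f -` {x\<in>f ` B. c x \<noteq> 0})"
    by (rule finite_vimage_iff[OF assms, symmetric])
  moreover have "(\<forall>x\<in>- f ` B. c x = 0) \<longleftrightarrow> (\<forall>b\<in>- B. c (f b) = 0)"
    by (simp flip: bij_image_Compl_eq[OF assms])
  ultimately show ?thesis by (simp add: fin_coeffs_def supp Ball_def)
qed

lemma is_basis_aut_image:
  assumes sm: "semimodule sc" and f: "module_aut sc f" and B: "is_basis sc B"
  shows "is_basis sc (f ` B)"
  unfolding is_basis_def
proof
  fix v
  have h: "module_hom sc f" and bij: "bij f" using f by (auto simp: module_aut_def)
  have inj: "inj f" using bij by (rule bij_is_inj)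
  have lc: "lin_comb sc (f ` B) c = f (lin_comb sc B (c \<circ> f))" for c
    using module_hom_lin_comb[OF sm h inj] by simp
  define c where "c = coord sc B (inv f v) \<circ> inv f"
  have cf: "c \<circ> f = coord sc B (inv f v)"
    using inj by (simp add: c_def comp_assoc)
  show "\<exists>!c. fin_coeffs (f ` B) c \<and> lin_comb sc (f ` B) c = v"
  proof (rule ex1I[of _ c])
    show "fin_coeffs (f ` B) c \<and> lin_comb sc (f ` B) c = v"
      using fin_coeffs_coord[OF B] lin_comb_coord[OF B] bij
      by (simp add: fin_coeffs_image_iff lc cf bij_is_surj surj_f_inv_f)
  next
    fix c' assume c': "fin_coeffs (f ` B) c' \<and> lin_comb sc (f ` B) c' = v"
    then have "lin_comb sc B (c' \<circ> f) = inv f v" using inj by (auto simp: lc inv_f_eq)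
    then have "coord sc B (inv f v) = c' \<circ> f"
      using c' bij by (intro coord_unique[OF B]) (simp_all add: fin_coeffs_image_iff)
    then have "c' \<circ> f = c \<circ> f" by (simp add: cf)
    then show "c' = c" using bij by (metis bij_is_surj comp_assoc comp_id surj_iff)
  qed
qed

lemma induced_perm_span1:
  assumes "module_hom sc f" "b \<in> B"
  shows "induced_perm sc f B (span1 sc b) = span1 sc (f b)"
  unfolding induced_perm_def
  by (rule the_equality) (use assms span1_image[OF assms(1)] in auto)

lemma induced_perm_eq_image:
  assumes "module_hom sc f" "L \<in> basis_lines sc B"
  shows "induced_perm sc f B L = f ` L"
  using assms induced_perm_span1[OF assms(1)] span1_image[OF assms(1)]
  unfolding basis_lines_def by auto

lemma induced_perm_bij:
  fixes sc :: "'r::comm_semiring_1 \<Rightarrow> 'v::comm_monoid_add \<Rightarrow> 'v"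
  assumes sm: "semimodule sc" and "zero_sum_free TYPE('r)" "connected_semiring TYPE('r)"
    and f: "module_aut sc f" and B: "is_basis sc B"
  shows "bij_betw (induced_perm sc f B) (basis_lines sc B) (basis_lines sc B)"
proof -
  have h: "module_hom sc f" and "inj f" using f by (auto simp: module_aut_def bij_is_inj)
  have "(\<lambda>L. f ` L) ` basis_lines sc B = basis_lines sc B"
    using basis_lines_unique[OF assms(1-3) is_basis_aut_image[OF sm f B] B]
    by (simp add: basis_lines_image[OF h])
  moreover have "inj_on (\<lambda>L. f ` L) (basis_lines sc B)"
    using \<open>inj f\<close> by (simp add: inj_on_def inj_image_eq_iff)
  ultimately show ?thesis
    by (simp add: bij_betw_def induced_perm_eq_image[OF h] cong: bij_betw_cong)
qed

theorem lemma3p8: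
  fixes sc :: "'r::comm_semiring_1 \<Rightarrow> 'v::comm_monoid_add \<Rightarrow> 'v"
  assumes zsf: "zero_sum_free TYPE('r)"
    and conn: "connected_semiring TYPE('r)"
    and free: "free_module sc"
  shows
    "(\<forall>B B'. is_basis sc B \<longrightarrow> is_basis sc B' \<longrightarrow> basis_lines sc B = basis_lines sc B')
     \<and> (\<forall>f B B'. module_aut sc f \<longrightarrow> is_basis sc B \<longrightarrow> is_basis sc B' \<longrightarrow>
           (\<forall>b\<in>B. \<forall>b'\<in>B'. span1 sc b = span1 sc b' \<longrightarrow> span1 sc (f b) = span1 sc (f b')))
     \<and> (\<forall>f B. module_aut sc f \<longrightarrow> is_basis sc B \<longrightarrow>
           bij_betw (induced_perm sc f B) (basis_lines sc B) (basis_lines sc B)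
           \<and> (\<forall>b\<in>B. induced_perm sc f B (span1 sc b) = span1 sc (f b)))
     \<and> (\<forall>f g B. module_aut sc f \<longrightarrow> module_aut sc g \<longrightarrow> is_basis sc B \<longrightarrow>
           (\<forall>L\<in>basis_lines sc B.
              induced_perm sc (f \<circ> g) B L = induced_perm sc f B (induced_perm sc g B L)))"
proof -
  have sm: "semimodule sc" using free by (simp add: free_module_def)
  have hom: "module_hom sc f" if "module_aut sc f" for f
    using that by (simp add: module_aut_def)
  have lines: "basis_lines sc B = basis_lines sc B'" if "is_basis sc B" "is_basis sc B'" for B B'
    using basis_lines_unique[OF sm zsf conn that] .
  have perm: "bij_betw (induced_perm sc f B) (basis_lines sc B) (basis_lines sc B)"
    if "module_aut sc f" "is_basis sc B" for f B
    using induced_perm_bij[OF sm zsf conn that] .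
  have comp: "induced_perm sc (f \<circ> g) B L = induced_perm sc f B (induced_perm sc g B L)"
    if "module_aut sc f" "module_aut sc g" "is_basis sc B" "L \<in> basis_lines sc B" for f g B L
  proof -
    have "module_hom sc (f \<circ> g)"
      using hom[OF that(1)] hom[OF that(2)] by (simp add: module_hom_def)
    moreover have "induced_perm sc g B L \<in> basis_lines sc B"
      using perm[OF that(2,3)] that(4) by (rule bij_betw_apply)
    ultimately show ?thesis
      using that by (simp add: induced_perm_eq_image hom image_comp)
  qed
  have same_line: "span1 sc (f b) = span1 sc (f b')"
    if "module_aut sc f" "span1 sc b = span1 sc b'" for f b b'
    using that by (simp add: span1_image hom)
  show ?thesis
    by (intro conjI allI impI ballI;
        rule lines same_line perm induced_perm_span1[OF hom] comp; assumption)
qed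

end
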